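(* Let $t$ be a positive integer and let $G$ be a graph with no odd $K_t$ minor. Then $$\chi(G) \le 2t\left(1+\log\left(\frac{|V(G)|}{t}\right)\right).$$
   Context: Graphs are finite and simple; $\chi$ is the chromatic number; $\log$ is the natural logarithm. A graph $G$ has an odd $K_t$ minor if a graph isomorphic to $K_t$ (complete graph on $t$ vertices) can be obtained from a subgraph $G'$ of $G$ by contracting a set of edges forming a cut in $G'$ (the empty set is a cut). *)

theory Defs
  imports Complex_Main
begin

definition simple_graph :: "'a set \<Rightarrow> 'a set set \<Rightarrow> bool" where
  "simple_graph V E \<longleftrightarrow> finite V \<and> (\<forall>e\<in>E. \<exists>u v. u \<in> V \<and> v \<in> V \<and> u \<noteq> v \<and> e = {u, v})"

definition subgraph :: "'a set \<Rightarrow> 'a set set \<Rightarrow> 'a set \<Rightarrow> 'a set set \<Rightarrow> bool" where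
  "subgraph V' E' V E \<longleftrightarrow> V' \<subseteq> V \<and> E' \<subseteq> E \<and> (\<forall>e\<in>E'. e \<subseteq> V')"

definition colourable :: "'a set \<Rightarrow> 'a set set \<Rightarrow> nat \<Rightarrow> bool" where
  "colourable V E k \<longleftrightarrow> (\<exists>c :: 'a \<Rightarrow> nat. (\<forall>v\<in>V. c v < k) \<and>
      (\<forall>u v. {u, v} \<in> E \<longrightarrow> u \<noteq> v \<longrightarrow> c u \<noteq> c v))"

definition chromatic_number :: "'a set \<Rightarrow> 'a set set \<Rightarrow> nat" where
  "chromatic_number V E = (LEAST k. colourable V E k)"

definition is_cut :: "'a set \<Rightarrow> 'a set set \<Rightarrow> 'a set set \<Rightarrow> bool" where
  "is_cut V' E' F \<longleftrightarrow> (\<exists>X \<subseteq> V'. F = {e \<in> E'. card (e \<inter> X) = 1})"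

definition components :: "'a set \<Rightarrow> 'a set set \<Rightarrow> 'a set set" where
  "components V' F = {{w \<in> V'. (\<lambda>x y. {x, y} \<in> F)\<^sup>*\<^sup>* u w} | u. u \<in> V'}"

text \<open>Contracting F in (V',E') yields a multigraph whose vertices are the components of
  (V',F) and whose edges are the edges of E' - F, each joining the components of its ends
  (a loop if both ends lie in the same component). This multigraph is isomorphic to K_t iff
  there are exactly t components, there are no loops, and every pair of distinct components
  is joined by exactly one edge.\<close>
definition contraction_is_complete :: "'a set \<Rightarrow> 'a set set \<Rightarrow> 'a set set \<Rightarrow> nat \<Rightarrow> bool" where
  "contraction_is_complete V' E' F t \<longleftrightarrow>
     card (components V' F) = t \<and>
     (\<forall>e \<in> E' - F. \<forall>C \<in> components V' F. \<not> e \<subseteq> C) \<and>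
     (\<forall>C \<in> components V' F. \<forall>D \<in> components V' F. C \<noteq> D \<longrightarrow>
        (\<exists>!e. e \<in> E' - F \<and> e \<inter> C \<noteq> {} \<and> e \<inter> D \<noteq> {}))"

definition has_odd_complete_minor :: "'a set \<Rightarrow> 'a set set \<Rightarrow> nat \<Rightarrow> bool" where
  "has_odd_complete_minor V E t \<longleftrightarrow>
     (\<exists>V' E' F. subgraph V' E' V E \<and> is_cut V' E' F \<and> contraction_is_complete V' E' F t)"

end

theory Submission
  imports Defs
begin

(*
  If G has no odd K_(t+1) minor, then G has an independent set with at least |V|/(2t)
  vertices. To find it, grow from a vertex r an odd cluster: a set C spanned by a tree T all
  of whose edges join an independent set I to C - I, such that I dominates the neighbourhood
  N of C and |C| < 2|I|. Growing stops when N has no neighbours outside C and N. Contracting T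
  turns C into one more branch set which, through I, sees every branch set inside N; so N has
  no odd K_t minor, and by induction on t it has a large independent set. By induction on |V|
  so has the set R of the remaining vertices, which has no edges to C or N; the larger of I
  and the independent set of N, together with that of R, is the required set.

  Repeatedly removing such an independent set as a colour class, k = ceil(2t ln(n/t)) times,
  leaves at most n (1 - 1/(2t))^k <= t vertices, which get colours of their own.
*)

definition nbhd :: "'a set \<Rightarrow> 'a set set \<Rightarrow> 'a set \<Rightarrow> 'a set" where
  "nbhd V E C = {v \<in> V - C. \<exists>u\<in>C. {u, v} \<in> E}"

definition induced :: "'a set set \<Rightarrow> 'a set \<Rightarrow> 'a set set" where
  "induced E W = {e \<in> E. e \<subseteq> W}"

definition indep :: "'a set set \<Rightarrow> 'a set \<Rightarrow> bool" where
  "indep E S \<longleftrightarrow> (\<forall>u\<in>S. \<forall>v\<in>S. {u, v} \<notin> E)"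

lemma simple_graph_edgeE:
  assumes "simple_graph V E" "e \<in> E"
  obtains u v where "u \<in> V" "v \<in> V" "u \<noteq> v" "e = {u, v}"
  using assms unfolding simple_graph_def by blast

lemma simple_graph_edge_in:
  assumes "simple_graph V E" "{u, v} \<in> E"
  shows "u \<in> V" "v \<in> V"
  using assms by (metis doubleton_eq_iff simple_graph_edgeE)+

lemma simple_graph_no_loop:
  assumes "simple_graph V E"
  shows "{u} \<notin> E"
  using assms by (auto elim!: simple_graph_edgeE)

lemma simple_graph_finite: "simple_graph V E \<Longrightarrow> finite V"
  unfolding simple_graph_def by simp

lemma simple_graph_induced:
  assumes "simple_graph V E" "W \<subseteq> V"
  shows "simple_graph W (induced E W)"
  using assms finite_subset unfolding simple_graph_def induced_def by fastforce

lemma simple_graph_subgraph: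
  assumes "simple_graph V E" "subgraph V' E' V E"
  shows "simple_graph V' E'"
proof -
  have "\<exists>u v. u \<in> V' \<and> v \<in> V' \<and> u \<noteq> v \<and> e = {u, v}" if "e \<in> E'" for e
  proof -
    have "e \<in> E" using that assms(2) unfolding subgraph_def by blast
    then obtain u v where "u \<noteq> v" "e = {u, v}"
      using assms(1) by (auto elim: simple_graph_edgeE)
    moreover have "e \<subseteq> V'" using that assms(2) unfolding subgraph_def by blast
    ultimately show ?thesis by blast
  qed
  moreover have "finite V'"
    using assms finite_subset unfolding simple_graph_def subgraph_def by blast
  ultimately show ?thesis unfolding simple_graph_def by blast
qed

lemma has_odd_complete_minor_induced:
  assumes "has_odd_complete_minor W (induced E W) k" "W \<subseteq> V"
  shows "has_odd_complete_minor V E k"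
proof -
  obtain V' E' F where "subgraph V' E' W (induced E W)" "is_cut V' E' F"
    "contraction_is_complete V' E' F k"
    using assms(1) unfolding has_odd_complete_minor_def by blast
  moreover from this(1) have "subgraph V' E' V E"
    using assms(2) unfolding subgraph_def induced_def by blast
  ultimately show ?thesis unfolding has_odd_complete_minor_def by blast
qed

lemma has_odd_complete_minor_one:
  assumes "r \<in> V"
  shows "has_odd_complete_minor V E 1"
proof -
  have "components {r} {} = {{r}}"
    unfolding components_def by auto
  then have "contraction_is_complete {r} {} {} 1"
    unfolding contraction_is_complete_def by simp
  moreover have "subgraph {r} {} V E" "is_cut {r} {} {}"
    using assms unfolding subgraph_def is_cut_def by auto
  ultimately show ?thesis
    unfolding has_odd_complete_minor_def by blast
qed

lemma indep_induced: "indep (induced E W) S \<Longrightarrow> S \<subseteq> W \<Longrightarrow> indep E S"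
  unfolding indep_def induced_def by auto

lemma indep_Un:
  "indep E (A \<union> B) \<longleftrightarrow> indep E A \<and> indep E B \<and> (\<forall>a\<in>A. \<forall>b\<in>B. {a, b} \<notin> E)"
  unfolding indep_def by (auto, metis insert_commute)

lemma exists_maximal_indep_subset:
  assumes "finite Z" "\<And>z. {z} \<notin> E"
  shows "\<exists>M\<subseteq>Z. indep E M \<and> (\<forall>z\<in>Z - M. \<exists>m\<in>M. {m, z} \<in> E)"
  using assms(1)
proof (induction rule: finite_induct)
  case empty
  then show ?case unfolding indep_def by blast
next
  case (insert z Z)
  then obtain M where M: "M \<subseteq> Z" "indep E M" "\<forall>y\<in>Z - M. \<exists>m\<in>M. {m, y} \<in> E"
    by blast
  show ?case
  proof (cases "\<exists>m\<in>M. {m, z} \<in> E")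
    case True
    then show ?thesis using M by (intro exI[of _ M]) auto
  next
    case False
    have "indep E (M \<union> {z})"
      using M(2) False assms(2) by (auto simp: indep_Un indep_def insert_commute)
    moreover have "\<forall>y\<in>insert z Z - (M \<union> {z}). \<exists>m\<in>M \<union> {z}. {m, y} \<in> E"
      using M(3) by blast
    ultimately show ?thesis
      using M(1) by (intro exI[of _ "M \<union> {z}"]) auto
  qed
qed

abbreviation edge_rel :: "'a set set \<Rightarrow> 'a \<Rightarrow> 'a \<Rightarrow> bool" where
  "edge_rel F \<equiv> \<lambda>x y. {x, y} \<in> F"

lemma components_eq_image: "components V F = (\<lambda>u. {w \<in> V. (edge_rel F)\<^sup>*\<^sup>* u w}) ` V"
  unfolding components_def by blast

lemma edge_rel_rtranclp_sym:
  assumes "(edge_rel F)\<^sup>*\<^sup>* x y"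
  shows "(edge_rel F)\<^sup>*\<^sup>* y x"
  using assms
proof (induction rule: rtranclp_induct)
  case (step y z)
  then have "edge_rel F z y" by (simp add: insert_commute)
  then show ?case using step.IH by (rule converse_rtranclp_into_rtranclp)
qed simp

lemma components_subset: "D \<in> components V F \<Longrightarrow> D \<subseteq> V"
  unfolding components_def by auto

lemma components_nonempty: "D \<in> components V F \<Longrightarrow> D \<noteq> {}"
  unfolding components_def by auto

lemma finite_components: "finite V \<Longrightarrow> finite (components V F)"
  by (simp add: components_eq_image)

lemma components_disjoint:
  assumes "D1 \<in> components V F" "D2 \<in> components V F" "x \<in> D1" "x \<in> D2"
  shows "D1 = D2"
proof -
  obtain u1 u2 where u: "D1 = {w \<in> V. (edge_rel F)\<^sup>*\<^sup>* u1 w}" "D2 = {w \<in> V. (edge_rel F)\<^sup>*\<^sup>* u2 w}"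
    using assms(1,2) unfolding components_def by auto
  have x: "(edge_rel F)\<^sup>*\<^sup>* u1 x" "(edge_rel F)\<^sup>*\<^sup>* u2 x"
    using assms(3,4) u by auto
  have "(edge_rel F)\<^sup>*\<^sup>* u1 u2" "(edge_rel F)\<^sup>*\<^sup>* u2 u1"
    using rtranclp_trans[OF x(1) edge_rel_rtranclp_sym[OF x(2)]]
      rtranclp_trans[OF x(2) edge_rel_rtranclp_sym[OF x(1)]] by auto
  then show ?thesis
    unfolding u by (meson rtranclp_trans)
qed

lemma edge_rel_rtranclp_Un_stays:
  assumes "\<forall>e\<in>F. e \<subseteq> A" "\<forall>e\<in>T. e \<inter> A = {}" "u \<in> A" "(edge_rel (F \<union> T))\<^sup>*\<^sup>* u w"
  shows "(edge_rel F)\<^sup>*\<^sup>* u w \<and> w \<in> A"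
  using assms(4)
proof (induction rule: rtranclp_induct)
  case (step y z)
  then have "{y, z} \<in> F"
    using assms(2) by auto
  then show ?case
    using step.IH assms(1) by (auto intro: rtranclp.rtrancl_into_rtrancl)
qed (use assms(3) in simp)

lemma edge_rel_rtranclp_mono:
  assumes "F \<subseteq> G" "(edge_rel F)\<^sup>*\<^sup>* u w"
  shows "(edge_rel G)\<^sup>*\<^sup>* u w"
  using assms(2) by (rule rtranclp_mono[THEN predicate2D, rotated]) (use assms(1) in blast)

lemma components_Un_connected:
  assumes "V' \<inter> C = {}" "\<forall>e\<in>F. e \<subseteq> V'" "\<forall>e\<in>T. e \<subseteq> C"
    and "r \<in> C" "\<forall>u\<in>C. (edge_rel T)\<^sup>*\<^sup>* r u"
  shows "components (V' \<union> C) (F \<union> T) = insert C (components V' F)"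
proof -
  let ?class = "\<lambda>u. {w \<in> V' \<union> C. (edge_rel (F \<union> T))\<^sup>*\<^sup>* u w}"
  have "?class u = {w \<in> V'. (edge_rel F)\<^sup>*\<^sup>* u w}" if "u \<in> V'" for u
    using edge_rel_rtranclp_Un_stays[of F V' T u] edge_rel_rtranclp_mono[OF Un_upper1, of F u _ T] that assms
    by blast
  then have V'_part: "?class ` V' = components V' F"
    unfolding components_eq_image by simp
  have "?class u = C" if "u \<in> C" for u
  proof -
    have "(edge_rel (T \<union> F))\<^sup>*\<^sup>* u w \<Longrightarrow> w \<in> C" for w
      using edge_rel_rtranclp_Un_stays[of T C F u w] that assms(1-3) by blast
    moreover have "(edge_rel T)\<^sup>*\<^sup>* u w" if "w \<in> C" for w
      using rtranclp_trans[OF edge_rel_rtranclp_sym[of T r u]] assms(5) \<open>u \<in> C\<close> that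
      by blast
    ultimately show ?thesis
      using edge_rel_rtranclp_mono[OF Un_upper1, of T u _ F] by (auto simp: Un_commute)
  qed
  then have "?class ` C = {C}"
    using assms(4) by blast
  then show ?thesis
    unfolding components_eq_image[of "V' \<union> C"] image_Un V'_part
    by (simp add: components_eq_image)
qed

section \<open>Adding a branch set to an odd clique minor\<close>

lemma card_doubleton_Int_eq_1:
  assumes "x \<noteq> y"
  shows "card ({x, y} \<inter> A) = 1 \<longleftrightarrow> (x \<in> A) \<noteq> (y \<in> A)"
  using assms by (cases "x \<in> A"; cases "y \<in> A") auto

(* Complementing X leaves the cut unchanged. A branch set inside X and one disjoint from X
   could only be joined by a cut edge, so X or its complement contains no branch set. *)
lemma exists_cut_side_avoiding_components:
  assumes sg: "simple_graph V' E'" and "is_cut V' E' F" and cc: "contraction_is_complete V' E' F s"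
  shows "\<exists>X\<subseteq>V'. F = {e \<in> E'. card (e \<inter> X) = 1} \<and> (\<forall>D\<in>components V' F. \<not> D \<subseteq> X)"
proof -
  obtain X where X: "X \<subseteq> V'" "F = {e \<in> E'. card (e \<inter> X) = 1}"
    using assms(2) unfolding is_cut_def by blast
  show ?thesis
  proof (cases "\<exists>D0\<in>components V' F. D0 \<subseteq> X")
    case False
    then show ?thesis using X by blast
  next
    case True
    then obtain D0 where D0: "D0 \<in> components V' F" "D0 \<subseteq> X" by blast
    have "card (e \<inter> (V' - X)) = 1 \<longleftrightarrow> card (e \<inter> X) = 1" if e: "e \<in> E'" for e
    proof -
      obtain x y where "x \<in> V'" "y \<in> V'" "x \<noteq> y" "e = {x, y}"
        by (rule simple_graph_edgeE[OF sg e])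
      then show ?thesis
        unfolding \<open>e = {x, y}\<close> card_doubleton_Int_eq_1[OF \<open>x \<noteq> y\<close>] by blast
    qed
    then have cut: "F = {e \<in> E'. card (e \<inter> (V' - X)) = 1}"
      using X(2) by blast
    have "D \<inter> X \<noteq> {}" if D: "D \<in> components V' F" for D
    proof
      assume DX: "D \<inter> X = {}"
      then have "D \<noteq> D0"
        using D0 components_nonempty by blast
      then obtain e where e: "e \<in> E' - F" "e \<inter> D0 \<noteq> {}" "e \<inter> D \<noteq> {}"
        using cc D0(1) D unfolding contraction_is_complete_def by metis
      then obtain p q where "p \<in> e \<inter> X" "q \<in> e - X"
        using D0(2) DX by blast
      moreover obtain x y where "x \<noteq> y" "e = {x, y}"
        using sg e(1) by (auto elim: simple_graph_edgeE)
      ultimately have "card (e \<inter> X) = 1"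
        using card_doubleton_Int_eq_1[of x y X] by auto
      then show False
        using e(1) X(2) by blast
    qed
    then show ?thesis
      using cut components_subset by (intro exI[of _ "V' - X"]) blast
  qed
qed

(* C, connected by T, becomes a new branch set, joined to each old branch set D by the edge
   from c D in C to b D in D. *)
locale branch_set_extension =
  fixes V' :: "'a set" and E' F T :: "'a set set" and C :: "'a set" and r :: 'a
    and c b :: "'a set \<Rightarrow> 'a"
  assumes simple: "simple_graph V' E'" and F_sub: "F \<subseteq> E'" and disjoint: "V' \<inter> C = {}"
    and T_sub: "\<forall>e\<in>T. e \<subseteq> C" and root: "r \<in> C" and connected: "\<forall>u\<in>C. (edge_rel T)\<^sup>*\<^sup>* r u"
    and links: "\<forall>D\<in>components V' F. c D \<in> C \<and> b D \<in> D"
begin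

abbreviation "link_edges \<equiv> (\<lambda>D. {c D, b D}) ` components V' F"

lemma old_edge: "e \<in> E' \<Longrightarrow> e \<subseteq> V' \<and> e \<noteq> {}"
  using simple by (auto elim!: simple_graph_edgeE)

lemma link_meets_component:
  assumes "D \<in> components V' F" "D' \<in> components V' F" "{c D', b D'} \<inter> D \<noteq> {}"
  shows "D = D'"
proof -
  have "c D' \<notin> D"
    using assms(1,2) links disjoint components_subset by blast
  then have "b D' \<in> D"
    using assms(3) by blast
  then show ?thesis
    using components_disjoint[OF assms(1,2)] assms(2) links by blast
qed

lemma components_extended: "components (V' \<union> C) (F \<union> T) = insert C (components V' F)"
  using components_Un_connected[OF disjoint _ T_sub root connected] F_sub old_edge by blast

lemma remaining_edges: "(E' \<union> T \<union> link_edges) - (F \<union> T) = (E' - F) \<union> link_edges"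
proof -
  have "e \<notin> T" if "e \<in> E'" for e
    using old_edge[OF that] T_sub disjoint by blast
  moreover have "e \<notin> F \<union> T" if e: "e \<in> link_edges" for e
  proof -
    obtain D where D: "D \<in> components V' F" "e = {c D, b D}"
      using e by blast
    then have "c D \<in> C" "b D \<in> V'"
      using links components_subset by blast+
    then show ?thesis
      using D(2) disjoint T_sub old_edge F_sub by blast
  qed
  ultimately show ?thesis by blast
qed

lemma unique_edge_to_new_branch_set:
  assumes D: "D \<in> components V' F" and AB: "{A, B} = {C, D}"
  shows "\<exists>!e. e \<in> (E' - F) \<union> link_edges \<and> e \<inter> A \<noteq> {} \<and> e \<inter> B \<noteq> {}"
proof -
  have meets: "e \<inter> A \<noteq> {} \<and> e \<inter> B \<noteq> {} \<longleftrightarrow> e \<inter> C \<noteq> {} \<and> e \<inter> D \<noteq> {}" for e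
    using AB unfolding doubleton_eq_iff by blast
  show ?thesis
    unfolding meets
  proof (rule ex1I)
    show "{c D, b D} \<in> (E' - F) \<union> link_edges \<and> {c D, b D} \<inter> C \<noteq> {} \<and> {c D, b D} \<inter> D \<noteq> {}"
      using D links by blast
  next
    fix e
    assume e: "e \<in> (E' - F) \<union> link_edges \<and> e \<inter> C \<noteq> {} \<and> e \<inter> D \<noteq> {}"
    then have "e \<notin> E'"
      using old_edge disjoint by blast
    then obtain D' where "D' \<in> components V' F" "e = {c D', b D'}"
      using e by blast
    then show "e = {c D, b D}"
      using link_meets_component[OF D] e by blast
  qed
qed

lemma unique_edge_between_old_branch_sets:
  assumes "contraction_is_complete V' E' F s"
    and A: "A \<in> components V' F" and B: "B \<in> components V' F" and "A \<noteq> B"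
  shows "\<exists>!e. e \<in> (E' - F) \<union> link_edges \<and> e \<inter> A \<noteq> {} \<and> e \<inter> B \<noteq> {}"
proof -
  have "e \<notin> link_edges" if e: "e \<inter> A \<noteq> {}" "e \<inter> B \<noteq> {}" for e
  proof
    assume "e \<in> link_edges"
    then obtain D where D: "D \<in> components V' F" "e = {c D, b D}"
      by blast
    have "A = D"
      using link_meets_component[OF A D(1)] e(1) D(2) by simp
    moreover have "B = D"
      using link_meets_component[OF B D(1)] e(2) D(2) by simp
    ultimately show False
      using \<open>A \<noteq> B\<close> by simp
  qed
  then have "e \<in> (E' - F) \<union> link_edges \<and> e \<inter> A \<noteq> {} \<and> e \<inter> B \<noteq> {} \<longleftrightarrow>
      e \<in> E' - F \<and> e \<inter> A \<noteq> {} \<and> e \<inter> B \<noteq> {}" for e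
    by (metis Un_iff)
  then show ?thesis
    using assms unfolding contraction_is_complete_def by simp
qed

lemma no_loop_extended:
  assumes "contraction_is_complete V' E' F s"
    and e: "e \<in> (E' - F) \<union> link_edges" and D: "D \<in> insert C (components V' F)"
  shows "\<not> e \<subseteq> D"
proof (cases "e \<in> E' - F")
  case True
  then have "\<not> e \<subseteq> C"
    using old_edge disjoint by blast
  then show ?thesis
    using True D assms(1) unfolding contraction_is_complete_def by blast
next
  case False
  then obtain D' where D': "D' \<in> components V' F" "e = {c D', b D'}"
    using e by blast
  then have "c D' \<in> C" "b D' \<in> V'"
    using links components_subset by blast+
  moreover have "D = C \<or> D \<subseteq> V'"
    using D components_subset by blast
  ultimately show ?thesis
    using D'(2) disjoint by blast
qed

lemma contraction_is_complete_extended: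
  assumes "contraction_is_complete V' E' F s"
  shows "contraction_is_complete (V' \<union> C) (E' \<union> T \<union> link_edges) (F \<union> T) (Suc s)"
  unfolding contraction_is_complete_def components_extended remaining_edges
proof (intro conjI ballI impI)
  have "C \<notin> components V' F"
    using root disjoint components_subset by blast
  then show "card (insert C (components V' F)) = Suc s"
    using assms finite_components[OF simple_graph_finite[OF simple]]
    unfolding contraction_is_complete_def by simp
next
  fix e D
  assume "e \<in> E' - F \<union> link_edges" "D \<in> insert C (components V' F)"
  then show "\<not> e \<subseteq> D"
    by (rule no_loop_extended[OF assms])
next
  fix A B
  assume "A \<in> insert C (components V' F)" "B \<in> insert C (components V' F)" "A \<noteq> B"
  then consider D where "D \<in> components V' F" "{A, B} = {C, D}"
    | "A \<in> components V' F" "B \<in> components V' F"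
    by blast
  then show "\<exists>!e. e \<in> E' - F \<union> link_edges \<and> e \<inter> A \<noteq> {} \<and> e \<inter> B \<noteq> {}"
  proof cases
    case 1
    then show ?thesis by (rule unique_edge_to_new_branch_set)
  next
    case 2
    show ?thesis
      by (rule unique_edge_between_old_branch_sets[OF assms 2 \<open>A \<noteq> B\<close>])
  qed
qed

end

(* The new side of the cut is X together with C - I: the tree edges cross it, the link edges
   join I to vertices outside X and so do not. *)
lemma is_cut_add_branch_set:
  assumes E'_sub: "\<forall>e\<in>E'. e \<subseteq> V'" and X: "X \<subseteq> V'" "F = {e \<in> E'. card (e \<inter> X) = 1}"
    and disjoint: "V' \<inter> C = {}" and "I \<subseteq> C"
    and T: "\<forall>e\<in>T. \<exists>u\<in>I. \<exists>v\<in>C - I. e = {u, v}"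
    and links: "\<forall>D\<in>K. c D \<in> I \<and> b D \<in> V' - X"
  shows "is_cut (V' \<union> C) (E' \<union> T \<union> (\<lambda>D. {c D, b D}) ` K) (F \<union> T)"
proof -
  let ?X = "X \<union> (C - I)"
  have old: "e \<inter> ?X = e \<inter> X" if "e \<in> E'" for e
    using E'_sub disjoint that by blast
  have tree: "card (e \<inter> ?X) = 1" if e: "e \<in> T" for e
  proof -
    obtain u v where "u \<in> I" "v \<in> C - I" "e = {u, v}"
      using T e by blast
    then have "e \<inter> ?X = {v}"
      using X(1) disjoint \<open>I \<subseteq> C\<close> by blast
    then show ?thesis by simp
  qed
  have link: "e \<inter> ?X = {}" if "e \<in> (\<lambda>D. {c D, b D}) ` K" for e
    using that links X(1) disjoint \<open>I \<subseteq> C\<close> by blast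
  have "F \<union> T = {e \<in> E' \<union> T \<union> (\<lambda>D. {c D, b D}) ` K. card (e \<inter> ?X) = 1}"
    using old tree link X(2) by auto
  moreover have "?X \<subseteq> V' \<union> C"
    using X(1) by blast
  ultimately show ?thesis
    unfolding is_cut_def by blast
qed

section \<open>Odd clusters\<close>

definition odd_cluster :: "'a set \<Rightarrow> 'a set set \<Rightarrow> 'a \<Rightarrow> 'a set \<Rightarrow> 'a set \<Rightarrow> 'a set set \<Rightarrow> bool" where
  "odd_cluster V E r C I T \<longleftrightarrow> C \<subseteq> V \<and> I \<subseteq> C \<and> r \<in> I \<and> indep E I \<and> T \<subseteq> E \<and>
     (\<forall>e\<in>T. \<exists>u\<in>I. \<exists>v\<in>C - I. e = {u, v}) \<and> (\<forall>u\<in>C. (edge_rel T)\<^sup>*\<^sup>* r u) \<and>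
     (\<forall>v\<in>nbhd V E C. \<exists>u\<in>I. {u, v} \<in> E) \<and> card C + 1 \<le> 2 * card I"

lemma odd_clusterD:
  assumes "odd_cluster V E r C I T"
  shows "C \<subseteq> V" "I \<subseteq> C" "r \<in> I" "indep E I" "T \<subseteq> E"
    "\<forall>e\<in>T. \<exists>u\<in>I. \<exists>v\<in>C - I. e = {u, v}" "\<forall>u\<in>C. (edge_rel T)\<^sup>*\<^sup>* r u"
    "\<forall>v\<in>nbhd V E C. \<exists>u\<in>I. {u, v} \<in> E" "card C + 1 \<le> 2 * card I"
  using assms unfolding odd_cluster_def by blast+

lemma odd_cluster_tree_edges_subset:
  assumes "odd_cluster V E r C I T"
  shows "\<forall>e\<in>T. e \<subseteq> C"
proof
  fix e
  assume "e \<in> T"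
  then obtain u v where "u \<in> I" "v \<in> C - I" "e = {u, v}"
    using odd_clusterD(6)[OF assms] by blast
  then show "e \<subseteq> C"
    using odd_clusterD(2)[OF assms] by blast
qed

lemma exists_dominating_links:
  assumes "\<forall>D\<in>\<D>. \<not> D \<subseteq> X" "\<forall>D\<in>\<D>. D \<subseteq> N" "\<forall>v\<in>N. \<exists>u\<in>I. {u, v} \<in> E"
  shows "\<exists>b c. \<forall>D\<in>\<D>. b D \<in> D - X \<and> c D \<in> I \<and> {c D, b D} \<in> E"
proof -
  have "\<exists>v. v \<in> D - X \<and> (\<exists>u\<in>I. {u, v} \<in> E)" if D: "D \<in> \<D>" for D
  proof -
    obtain v where "v \<in> D" "v \<notin> X"
      using assms(1) D by blast
    moreover have "v \<in> N"
      using assms(2) D \<open>v \<in> D\<close> by blast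
    ultimately show ?thesis
      using assms(3) by blast
  qed
  then obtain b where b: "\<forall>D\<in>\<D>. b D \<in> D - X \<and> (\<exists>u\<in>I. {u, b D} \<in> E)"
    by metis
  then have "\<forall>D\<in>\<D>. \<exists>u. u \<in> I \<and> {u, b D} \<in> E"
    by blast
  then obtain c where "\<forall>D\<in>\<D>. c D \<in> I \<and> {c D, b D} \<in> E"
    by metis
  then show ?thesis
    using b by blast
qed

lemma has_odd_complete_minor_Suc_from_nbhd:
  assumes sg: "simple_graph V E" and cluster: "odd_cluster V E r C I T"
    and minor: "has_odd_complete_minor (nbhd V E C) (induced E (nbhd V E C)) s"
  shows "has_odd_complete_minor V E (Suc s)"
proof -
  define N where "N = nbhd V E C"
  have N: "N \<subseteq> V" "N \<inter> C = {}"
    unfolding N_def nbhd_def by auto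
  obtain V' E' F where sub: "subgraph V' E' N (induced E N)" and "is_cut V' E' F"
    and cc: "contraction_is_complete V' E' F s"
    using minor unfolding has_odd_complete_minor_def N_def by blast
  have V'_sub: "V' \<subseteq> N" and E'_sub: "E' \<subseteq> E"
    using sub unfolding subgraph_def induced_def by auto
  have sg': "simple_graph V' E'"
    using simple_graph_subgraph[OF simple_graph_induced[OF sg N(1)] sub] .
  obtain X where X: "X \<subseteq> V'" "F = {e \<in> E'. card (e \<inter> X) = 1}"
    and avoid: "\<forall>D\<in>components V' F. \<not> D \<subseteq> X"
    using exists_cut_side_avoiding_components[OF sg' \<open>is_cut V' E' F\<close> cc] by blast
  have "\<forall>D\<in>components V' F. D \<subseteq> N"
    using components_subset V'_sub by blast
  then obtain b c where bc: "\<forall>D\<in>components V' F. b D \<in> D - X \<and> c D \<in> I \<and> {c D, b D} \<in> E"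
    using exists_dominating_links[OF avoid _ odd_clusterD(8)[OF cluster, folded N_def]] by blast
  note cluster_facts = odd_clusterD[OF cluster] odd_cluster_tree_edges_subset[OF cluster]
  interpret branch_set_extension V' E' F T C r c b
  proof
    show "F \<subseteq> E'" "V' \<inter> C = {}" "r \<in> C"
      using X(2) V'_sub N(2) cluster_facts(2,3) by blast+
    show "\<forall>D\<in>components V' F. c D \<in> C \<and> b D \<in> D"
      using bc cluster_facts(2) by blast
  qed (use sg' cluster_facts(7,10) in auto)
  have links: "\<forall>D\<in>components V' F. c D \<in> I \<and> b D \<in> V' - X"
  proof
    fix D
    assume D: "D \<in> components V' F"
    then show "c D \<in> I \<and> b D \<in> V' - X"
      using bc components_subset[OF D] by blast
  qed
  have "E' \<union> T \<union> link_edges \<subseteq> E"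
    using E'_sub cluster_facts(5) bc by blast
  moreover have "\<forall>e\<in>E' \<union> T \<union> link_edges. e \<subseteq> V' \<union> C"
    using old_edge cluster_facts(2,10) links by blast
  moreover have "V' \<union> C \<subseteq> V"
    using V'_sub N(1) cluster_facts(1) by blast
  ultimately have "subgraph (V' \<union> C) (E' \<union> T \<union> link_edges) V E"
    by (simp add: subgraph_def)
  moreover have "is_cut (V' \<union> C) (E' \<union> T \<union> link_edges) (F \<union> T)"
    using old_edge by (intro is_cut_add_branch_set[OF _ X disjoint cluster_facts(2,6) links]) blast
  ultimately show ?thesis
    using contraction_is_complete_extended[OF cc] unfolding has_odd_complete_minor_def by blast
qed

definition nbhd_closed :: "'a set \<Rightarrow> 'a set set \<Rightarrow> 'a set \<Rightarrow> bool" where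
  "nbhd_closed V E C \<longleftrightarrow> (\<forall>v\<in>nbhd V E C. \<forall>w. {v, w} \<in> E \<longrightarrow> w \<in> C \<union> nbhd V E C)"

lemma odd_cluster_singleton:
  assumes "simple_graph V E" "r \<in> V"
  shows "odd_cluster V E r {r} {r} {}"
  using assms simple_graph_no_loop unfolding odd_cluster_def indep_def nbhd_def by fastforce

(* C gains y and M, I gains M: as M is nonempty, |C| < 2|I| survives, and the maximality of
   M keeps the new neighbourhood dominated by I. *)
locale cluster_growth =
  fixes V :: "'a set" and E :: "'a set set" and r :: 'a and C I :: "'a set" and T :: "'a set set"
    and y i :: 'a and M :: "'a set"
  assumes simple: "simple_graph V E" and cluster: "odd_cluster V E r C I T"
    and y: "y \<in> nbhd V E C" and i: "i \<in> I" "{i, y} \<in> E"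
    and M_sub: "M \<subseteq> {z \<in> V - (C \<union> nbhd V E C). {y, z} \<in> E}" and M_ne: "M \<noteq> {}"
    and M_indep: "indep E M"
    and M_maximal: "\<forall>z\<in>V - (C \<union> nbhd V E C) - M. {y, z} \<in> E \<longrightarrow> (\<exists>m\<in>M. {m, z} \<in> E)"
begin

abbreviation "C' \<equiv> C \<union> {y} \<union> M"
abbreviation "I' \<equiv> I \<union> M"
abbreviation "T' \<equiv> T \<union> {{i, y}} \<union> (\<lambda>m. {y, m}) ` M"

lemma y_fresh: "y \<in> V" "y \<notin> C" "y \<notin> M"
  using y M_sub unfolding nbhd_def by auto

lemma indep_grown: "indep E I'"
proof -
  have "{u, m} \<notin> E" if "u \<in> I" "m \<in> M" for u m
  proof
    assume "{u, m} \<in> E"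
    then have "m \<in> nbhd V E C"
      using that M_sub odd_clusterD(2)[OF cluster] unfolding nbhd_def by blast
    then show False
      using that M_sub by blast
  qed
  then show ?thesis
    using odd_clusterD(4)[OF cluster] M_indep by (simp add: indep_Un)
qed

lemma tree_edges_grown: "\<forall>e\<in>T'. \<exists>u\<in>I'. \<exists>v\<in>C' - I'. e = {u, v}"
proof
  have y: "y \<in> C' - I'"
    using y_fresh odd_clusterD(2)[OF cluster] by blast
  fix e
  assume "e \<in> T'"
  then consider "e \<in> T" | "e = {i, y}" | m where "m \<in> M" "e = {m, y}"
    by (auto simp: insert_commute)
  then show "\<exists>u\<in>I'. \<exists>v\<in>C' - I'. e = {u, v}"
  proof cases
    case 1
    then obtain u v where "u \<in> I" "v \<in> C - I" "e = {u, v}"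
      using odd_clusterD(6)[OF cluster] by blast
    moreover have "v \<in> C' - I'"
      using \<open>v \<in> C - I\<close> M_sub by blast
    ultimately show ?thesis
      by blast
  qed (use y i(1) in blast)+
qed

lemma connected_grown: "\<forall>u\<in>C'. (edge_rel T')\<^sup>*\<^sup>* r u"
proof -
  have old: "(edge_rel T')\<^sup>*\<^sup>* r u" if "u \<in> C" for u
    using odd_clusterD(7)[OF cluster] that edge_rel_rtranclp_mono[of T T'] by blast
  then have ry: "(edge_rel T')\<^sup>*\<^sup>* r y"
    using i odd_clusterD(2)[OF cluster] by (blast intro: rtranclp.rtrancl_into_rtrancl)
  then have "(edge_rel T')\<^sup>*\<^sup>* r m" if "m \<in> M" for m
    using that by (blast intro: rtranclp.rtrancl_into_rtrancl)
  then show ?thesis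
    using old ry by blast
qed

lemma dominated_grown: "\<forall>v\<in>nbhd V E C'. \<exists>u\<in>I'. {u, v} \<in> E"
proof
  fix v
  assume "v \<in> nbhd V E C'"
  then obtain u where v: "v \<in> V" "v \<notin> C'" and u: "u \<in> C'" "{u, v} \<in> E"
    unfolding nbhd_def by blast
  consider "v \<in> nbhd V E C" | "u \<in> M" | "u = y" "v \<notin> nbhd V E C"
    using u v unfolding nbhd_def by blast
  then show "\<exists>u\<in>I'. {u, v} \<in> E"
  proof cases
    case 1
    then show ?thesis
      using odd_clusterD(8)[OF cluster] by blast
  next
    case 2
    then show ?thesis
      using u by blast
  next
    case 3
    then show ?thesis
      using M_maximal u v by blast
  qed
qed

lemma M_subset: "M \<subseteq> V"
  using M_sub by blast

lemma card_grown: "card C' = card C + 1 + card M" "card I' = card I + card M"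
proof -
  have "finite C" "finite M"
    using odd_clusterD(1)[OF cluster] M_subset simple_graph_finite[OF simple] finite_subset
    by auto
  moreover have "finite I"
    using odd_clusterD(2)[OF cluster] \<open>finite C\<close> finite_subset by auto
  moreover have "C \<inter> M = {}" "I \<inter> M = {}"
    using M_sub odd_clusterD(2)[OF cluster] by blast+
  ultimately show "card C' = card C + 1 + card M" "card I' = card I + card M"
    using y_fresh by (simp_all add: card_Un_disjoint)
qed

lemma odd_cluster_grown: "odd_cluster V E r C' I' T'"
proof -
  have "card M \<ge> 1"
    using M_ne M_subset simple_graph_finite[OF simple] finite_subset
    by (metis One_nat_def Suc_leI card_gt_0_iff)
  then have "card C' + 1 \<le> 2 * card I'"
    using card_grown odd_clusterD(9)[OF cluster] by simp
  moreover have "C' \<subseteq> V" "T' \<subseteq> E"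
    using odd_clusterD(1,5)[OF cluster] y_fresh M_sub i(2) by auto
  ultimately show ?thesis
    unfolding odd_cluster_def
    using odd_clusterD(2,3)[OF cluster] indep_grown tree_edges_grown connected_grown dominated_grown
    by blast
qed

end

lemma exists_larger_odd_cluster:
  assumes sg: "simple_graph V E" and cluster: "odd_cluster V E r C I T"
    and "\<not> nbhd_closed V E C"
  shows "\<exists>C' I' T'. odd_cluster V E r C' I' T' \<and> card C < card C'"
proof -
  obtain y w where y: "y \<in> nbhd V E C" and yw: "{y, w} \<in> E" "w \<notin> C \<union> nbhd V E C"
    using assms(3) unfolding nbhd_closed_def by blast
  obtain i where i: "i \<in> I" "{i, y} \<in> E"
    using odd_clusterD(8)[OF cluster] y by blast
  define Z where "Z = {z \<in> V - (C \<union> nbhd V E C). {y, z} \<in> E}"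
  have "w \<in> Z"
    using yw simple_graph_edge_in[OF sg yw(1)] unfolding Z_def by blast
  have "finite Z"
    using simple_graph_finite[OF sg] unfolding Z_def by simp
  then obtain M where M: "M \<subseteq> Z" "indep E M" "\<forall>z\<in>Z - M. \<exists>m\<in>M. {m, z} \<in> E"
    using exists_maximal_indep_subset simple_graph_no_loop[OF sg] by meson
  then have "M \<noteq> {}"
    using \<open>w \<in> Z\<close> by blast
  then interpret cluster_growth V E r C I T y i M
    using sg cluster y i M unfolding Z_def by unfold_locales blast+
  have "card C < card C'"
    using card_grown(1) by simp
  then show ?thesis
    using odd_cluster_grown by blast
qed

lemma exists_closed_odd_cluster:
  assumes sg: "simple_graph V E" and "r \<in> V"
  shows "\<exists>C I T. odd_cluster V E r C I T \<and> nbhd_closed V E C"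
proof -
  have "\<exists>C I T. odd_cluster V E r C I T \<and> nbhd_closed V E C"
    if "odd_cluster V E r C I T" for C I T
    using that
  proof (induction "card V - card C" arbitrary: C I T rule: less_induct)
    case less
    show ?case
    proof (cases "nbhd_closed V E C")
      case False
      then obtain C' I' T' where C': "odd_cluster V E r C' I' T'" "card C < card C'"
        using exists_larger_odd_cluster[OF sg less.prems] by blast
      moreover have "card C' \<le> card V"
        using odd_clusterD(1)[OF C'(1)] simple_graph_finite[OF sg] by (rule card_mono[rotated])
      ultimately show ?thesis
        using less.hyps by (meson diff_less_mono2 order_less_le_trans)
    qed (use less.prems in blast)
  qed
  then show ?thesis
    using odd_cluster_singleton[OF assms] by blast
qed

lemma nbhd_closed_no_edge_beyond:
  assumes "nbhd_closed V E C" "u \<in> C \<union> nbhd V E C" "v \<in> V - (C \<union> nbhd V E C)"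
  shows "{u, v} \<notin> E"
  using assms unfolding nbhd_closed_def nbhd_def by blast

lemma card_eq_disjoint_parts:
  assumes "A \<subseteq> V" "B \<subseteq> V" "A \<inter> B = {}" "finite V"
  shows "card V = card A + card B + card (V - (A \<union> B))"
proof -
  have "card (A \<union> B) = card A + card B"
    using assms by (simp add: card_Un_disjoint finite_subset)
  moreover have "card (A \<union> B) \<le> card V"
    using assms by (simp add: card_mono)
  moreover have "card (V - (A \<union> B)) = card V - card (A \<union> B)"
    using assms by (simp add: card_Diff_subset finite_subset)
  ultimately show ?thesis
    by linarith
qed

lemma large_indep_set_from_closed_cluster:
  fixes t :: nat
  assumes sg: "simple_graph V E" and cluster: "odd_cluster V E r C I T"
    and closed: "nbhd_closed V E C"
    and SN: "SN \<subseteq> nbhd V E C" "indep E SN" "card (nbhd V E C) \<le> 2 * t * card SN"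
    and SR: "SR \<subseteq> V - (C \<union> nbhd V E C)" "indep E SR"
      "card (V - (C \<union> nbhd V E C)) \<le> 2 * Suc t * card SR"
  shows "\<exists>S\<subseteq>V. indep E S \<and> card V \<le> 2 * Suc t * card S"
proof -
  define N where "N = nbhd V E C"
  define S0 where "S0 = (if card SN \<le> card I then I else SN)"
  have S0: "S0 \<subseteq> C \<union> N" "indep E S0" "card I \<le> card S0" "card SN \<le> card S0"
    using odd_clusterD(2,4)[OF cluster] SN(1,2) unfolding S0_def N_def by auto
  have "indep E (S0 \<union> SR)"
    using S0(1,2) SR(1,2) nbhd_closed_no_edge_beyond[OF closed] unfolding indep_Un N_def by blast
  moreover have SV: "S0 \<union> SR \<subseteq> V"
    using S0(1) SR(1) odd_clusterD(1)[OF cluster] unfolding N_def nbhd_def by blast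
  moreover have "card V \<le> 2 * Suc t * card (S0 \<union> SR)"
  proof -
    have fin: "finite V"
      using simple_graph_finite[OF sg] .
    have "C \<subseteq> V" "N \<subseteq> V" "C \<inter> N = {}"
      using odd_clusterD(1)[OF cluster] unfolding N_def nbhd_def by auto
    then have "card V = card C + card N + card (V - (C \<union> N))"
      using fin by (rule card_eq_disjoint_parts)
    also have "\<dots> \<le> 2 * card S0 + 2 * t * card S0 + 2 * Suc t * card SR"
      using odd_clusterD(9)[OF cluster] S0(3,4) SN(3) SR(3) mult_le_mono2[OF S0(4), of "2 * t"]
      unfolding N_def by linarith
    also have "\<dots> = 2 * Suc t * (card S0 + card SR)"
      by (simp add: algebra_simps)
    also have "card S0 + card SR = card (S0 \<union> SR)"
      using S0(1) SR(1) finite_subset[OF SV fin]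
      by (intro card_Un_disjoint[symmetric]) (auto simp: N_def)
    finally show ?thesis .
  qed
  ultimately show ?thesis by blast
qed

lemma exists_large_indep_set_step:
  fixes t :: nat
  assumes IH: "\<And>V' E' :: 'a set set. simple_graph V' E' \<Longrightarrow> \<not> has_odd_complete_minor V' E' (Suc t) \<Longrightarrow>
      \<exists>S\<subseteq>V'. indep E' S \<and> card V' \<le> 2 * t * card S"
  shows "simple_graph (V :: 'a set) E \<Longrightarrow> \<not> has_odd_complete_minor V E (Suc (Suc t)) \<Longrightarrow>
      \<exists>S\<subseteq>V. indep E S \<and> card V \<le> 2 * Suc t * card S"
proof (induction "card V" arbitrary: V E rule: less_induct)
  case less
  note sg = less.prems(1)
  show ?case
  proof (cases "V = {}")
    case False
    then obtain r where "r \<in> V" by blast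
    then obtain C I T where cluster: "odd_cluster V E r C I T" and closed: "nbhd_closed V E C"
      using exists_closed_odd_cluster[OF sg] by blast
    define N where "N = nbhd V E C"
    define R where "R = V - (C \<union> N)"
    have "N \<subseteq> V" "R \<subseteq> V"
      unfolding N_def R_def nbhd_def by auto
    have "\<not> has_odd_complete_minor N (induced E N) (Suc t)"
      using has_odd_complete_minor_Suc_from_nbhd[OF sg cluster] less.prems(2) unfolding N_def by blast
    then obtain SN where SN: "SN \<subseteq> N" "indep (induced E N) SN" "card N \<le> 2 * t * card SN"
      using IH[OF simple_graph_induced[OF sg \<open>N \<subseteq> V\<close>]] by blast
    have "\<not> has_odd_complete_minor R (induced E R) (Suc (Suc t))"
      using has_odd_complete_minor_induced[OF _ \<open>R \<subseteq> V\<close>] less.prems(2) by blast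
    moreover have "card R < card V"
      using \<open>r \<in> V\<close> odd_clusterD(2,3)[OF cluster] simple_graph_finite[OF sg]
      unfolding R_def by (intro psubset_card_mono) auto
    ultimately obtain SR where SR: "SR \<subseteq> R" "indep (induced E R) SR" "card R \<le> 2 * Suc t * card SR"
      using less.hyps simple_graph_induced[OF sg \<open>R \<subseteq> V\<close>] by blast
    show ?thesis
      using large_indep_set_from_closed_cluster[OF sg cluster closed, of SN t SR]
        SN SR indep_induced unfolding N_def R_def by blast
  qed (simp add: indep_def)
qed

lemma exists_large_indep_set:
  fixes t :: nat
  shows "simple_graph V E \<Longrightarrow> \<not> has_odd_complete_minor V E (Suc t) \<Longrightarrow>
    \<exists>S\<subseteq>V. indep E S \<and> card V \<le> 2 * t * card S"
proof (induction t arbitrary: V E)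
  case 0
  then have "V = {}"
    using has_odd_complete_minor_one by fastforce
  then show ?case by (simp add: indep_def)
next
  case (Suc t)
  then show ?case by (rule exists_large_indep_set_step)
qed

section \<open>Colouring\<close>

lemma colourable_card:
  assumes "simple_graph V E"
  shows "colourable V E (card V)"
proof -
  obtain h where h: "bij_betw h V {0..<card V}"
    using ex_bij_betw_finite_nat simple_graph_finite[OF assms] by blast
  have "h u \<noteq> h v" if "{u, v} \<in> E" "u \<noteq> v" for u v
    using simple_graph_edge_in[OF assms that(1)] that(2) h unfolding bij_betw_def inj_on_def by blast
  moreover have "\<forall>v\<in>V. h v < card V"
    using h unfolding bij_betw_def by auto
  ultimately show ?thesis
    unfolding colourable_def by blast
qed

lemma colourable_add_indep_class:
  assumes sg: "simple_graph V E" and "indep E S"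
    and "colourable (V - S) (induced E (V - S)) m"
  shows "colourable V E (Suc m)"
proof -
  obtain c where c: "\<forall>v\<in>V - S. c v < m"
    "\<forall>u v. {u, v} \<in> induced E (V - S) \<longrightarrow> u \<noteq> v \<longrightarrow> c u \<noteq> c v"
    using assms(3) unfolding colourable_def by blast
  define c' where "c' v = (if v \<in> S then m else c v)" for v
  have "c' u \<noteq> c' v" if e: "{u, v} \<in> E" "u \<noteq> v" for u v
  proof -
    have "u \<in> V" "v \<in> V"
      using simple_graph_edge_in[OF sg e(1)] by auto
    moreover have "\<not> (u \<in> S \<and> v \<in> S)"
      using \<open>indep E S\<close> e(1) unfolding indep_def by blast
    ultimately consider "u \<in> S" "v \<in> V - S" | "v \<in> S" "u \<in> V - S" | "u \<in> V - S" "v \<in> V - S"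
      by blast
    then show ?thesis
    proof cases
      case 3
      then have "{u, v} \<in> induced E (V - S)"
        using e(1) unfolding induced_def by blast
      then show ?thesis
        using c(2) e(2) 3 unfolding c'_def by simp
    qed (use c(1) in \<open>fastforce simp: c'_def\<close>)+
  qed
  moreover have "\<forall>v\<in>V. c' v < Suc m"
    using c(1) unfolding c'_def by (simp add: less_Suc_eq)
  ultimately show ?thesis
    unfolding colourable_def by blast
qed

lemma chromatic_number_le: "colourable V E m \<Longrightarrow> chromatic_number V E \<le> m"
  unfolding chromatic_number_def by (rule Least_le)

lemma card_Diff_large_subset_le:
  fixes t :: nat
  assumes "finite V" "S \<subseteq> V" "card V \<le> 2 * t * card S"
  shows "real (card (V - S)) \<le> real (card V) * (1 - 1 / (2 * real t))"
proof (cases "t = 0")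
  case False
  have "real (card V) \<le> 2 * real t * real (card S)"
    using assms(3) by (metis of_nat_le_iff of_nat_mult of_nat_numeral)
  then have "real (card V) / (2 * real t) \<le> real (card S)"
    using False by (simp add: field_simps)
  moreover have "real (card (V - S)) = real (card V) - real (card S)"
    using assms(1,2) by (simp add: card_Diff_subset finite_subset card_mono)
  ultimately show ?thesis
    by (simp add: algebra_simps)
qed (use assms in simp)

lemma colourable_geometric_bound:
  fixes t :: nat
  assumes "t > 0"
  shows "simple_graph V E \<Longrightarrow> \<not> has_odd_complete_minor V E t \<Longrightarrow>
    \<exists>m. colourable V E m \<and> real m \<le> real k + real (card V) * (1 - 1 / (2 * real t)) ^ k"
proof (induction k arbitrary: V E)
  case 0
  then show ?case
    using colourable_card by auto
next
  case (Suc k)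
  note sg = Suc.prems(1)
  define q where "q = 1 - 1 / (2 * real t)"
  obtain t0 where "t = Suc t0"
    using assms by (cases t) auto
  then obtain S where S: "S \<subseteq> V" "indep E S" "card V \<le> 2 * t0 * card S"
    using exists_large_indep_set[OF sg] Suc.prems(2) by blast
  then have "card V \<le> 2 * t * card S"
    using \<open>t = Suc t0\<close> by simp
  have "V - S \<subseteq> V" by blast
  have "\<not> has_odd_complete_minor (V - S) (induced E (V - S)) t"
    using has_odd_complete_minor_induced[OF _ \<open>V - S \<subseteq> V\<close>] Suc.prems(2) by blast
  then obtain m where m: "colourable (V - S) (induced E (V - S)) m"
    "real m \<le> real k + real (card (V - S)) * q ^ k"
    using Suc.IH[OF simple_graph_induced[OF sg \<open>V - S \<subseteq> V\<close>]] unfolding q_def by blast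
  have "q \<ge> 0"
    using assms unfolding q_def by (simp add: field_simps)
  then have "real (card (V - S)) * q ^ k \<le> real (card V) * q * q ^ k"
    using card_Diff_large_subset_le[OF simple_graph_finite[OF sg] S(1) \<open>card V \<le> 2 * t * card S\<close>]
    unfolding q_def[symmetric] by (simp add: mult_right_mono)
  then have "real (Suc m) \<le> real (Suc k) + real (card V) * q ^ Suc k"
    using m(2) by (simp add: algebra_simps)
  then show ?case
    using colourable_add_indep_class[OF sg S(2) m(1)] unfolding q_def by blast
qed

lemma one_minus_power_le_exp:
  fixes x :: real
  assumes "0 \<le> x" "x \<le> 1"
  shows "(1 - x) ^ k \<le> exp (- (real k * x))"
proof -
  have "(1 - x) ^ k \<le> exp (- x) ^ k"
    using exp_ge_add_one_self[of "- x"] assms by (intro power_mono) simp_all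
  then show ?thesis
    by (simp add: exp_of_nat_mult[symmetric])
qed

lemma geometric_term_le:
  fixes n t :: real
  assumes "1 \<le> t" "t \<le> n" "2 * t * ln (n / t) \<le> real k"
  shows "n * (1 - 1 / (2 * t)) ^ k \<le> t"
proof -
  have "ln (n / t) \<le> real k * (1 / (2 * t))"
    using assms by (simp add: field_simps)
  then have "exp (- (real k * (1 / (2 * t)))) \<le> exp (- ln (n / t))"
    by simp
  also have "\<dots> = t / n"
    using assms(1,2) by (simp add: exp_minus)
  finally have "(1 - 1 / (2 * t)) ^ k \<le> t / n"
    using one_minus_power_le_exp[of "1 / (2 * t)" k] assms(1) by simp
  then show ?thesis
    using assms(1,2) by (simp add: field_simps)
qed

theorem corollary2p5:
  fixes V :: "'a set" and E :: "'a set set" and t :: nat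
  assumes "simple_graph V E"
    and "t > 0"
    and "card V \<ge> t"
    and "\<not> has_odd_complete_minor V E t"
  shows "real (chromatic_number V E) \<le> 2 * real t * (1 + ln (real (card V) / real t))"
proof -
  define L where "L = ln (real (card V) / real t)"
  define k where "k = nat \<lceil>2 * real t * L\<rceil>"
  have "L \<ge> 0"
    using assms(2,3) unfolding L_def by simp
  then have "real k = of_int \<lceil>2 * real t * L\<rceil>"
    unfolding k_def by simp
  then have k: "2 * real t * L \<le> real k" "real k \<le> 2 * real t * L + 1"
    using le_of_int_ceiling of_int_ceiling_le_add_one by simp_all
  obtain m where m: "colourable V E m"
    "real m \<le> real k + real (card V) * (1 - 1 / (2 * real t)) ^ k"
    using colourable_geometric_bound[OF assms(2,1,4)] by blast
  have "real (card V) * (1 - 1 / (2 * real t)) ^ k \<le> real t"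
    using geometric_term_le k(1) assms(2,3) unfolding L_def by simp
  then have "real m \<le> 2 * real t * (1 + L)"
    using m(2) k(2) assms(2) by (simp add: algebra_simps)
  then show ?thesis
    using chromatic_number_le[OF m(1)] unfolding L_def by linarith
qed

end
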